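(* There exists a constant $c>0$ such that for all sufficiently large $n$ there is an $n$-vertex $3$-uniform generalised hedgehog $H^*$ such that, for every standard hedgehog $S_n$ on $n$ vertices (whenever $n=m+\binom{m}{2}$ for some integer $m$), $R(S_n,H^* )\ge c\,n^{3/2}/\log n$.
   Context: A $3$-graph is a $3$-uniform hypergraph. For $3$-graphs $G,H$, the ($2$-colour) Ramsey number $R(G,H)$ is the least $N$ such that every colouring of the edges of the complete $3$-graph on $N$ vertices with red and blue contains a blue copy of $G$ or a red copy of $H$. A (generalised) hedgehog is a $3$-graph on vertex set $B\sqcup S$ ($B$ the body, $S$ the spikes) in which every edge consists of one spike and two body vertices, and every spike lies in exactly one edge (different spikes may be attached to the same pair of body vertices, and some pairs of body vertices may have no spike). The standard hedgehog with body of size $m$ has $|S|=\binom{m}{2}$ and each pair of body vertices forms an edge with exactly one spike. *)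

theory Defs
  imports Complex_Main
begin

definition is_3graph :: "'a set \<Rightarrow> 'a set set \<Rightarrow> bool" where
  "is_3graph V E \<longleftrightarrow> finite V \<and> (\<forall>e\<in>E. e \<subseteq> V \<and> card e = 3)"

text \<open>A 2-colouring of the complete 3-graph on vertex set {0..<N} is a map on 3-sets;
  True = red, False = blue.\<close>
definition has_copy :: "nat \<Rightarrow> (nat set \<Rightarrow> bool) \<Rightarrow> bool \<Rightarrow> 'a set \<Rightarrow> 'a set set \<Rightarrow> bool" where
  "has_copy N col b V E \<longleftrightarrow>
     (\<exists>f. inj_on f V \<and> f ` V \<subseteq> {0..<N} \<and> (\<forall>e\<in>E. col (f ` e) = b))"

definition arrows3 :: "nat \<Rightarrow> 'a set \<Rightarrow> 'a set set \<Rightarrow> 'b set \<Rightarrow> 'b set set \<Rightarrow> bool" where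
  "arrows3 N VG EG VH EH \<longleftrightarrow>
     (\<forall>col. has_copy N col False VG EG \<or> has_copy N col True VH EH)"

definition ramsey3 :: "'a set \<Rightarrow> 'a set set \<Rightarrow> 'b set \<Rightarrow> 'b set set \<Rightarrow> nat" where
  "ramsey3 VG EG VH EH = (LEAST N. arrows3 N VG EG VH EH)"

definition hedgehog_with :: "'a set \<Rightarrow> 'a set \<Rightarrow> 'a set \<Rightarrow> 'a set set \<Rightarrow> bool" where
  "hedgehog_with B S V E \<longleftrightarrow>
     is_3graph V E \<and> V = B \<union> S \<and> B \<inter> S = {} \<and>
     (\<forall>e\<in>E. card (e \<inter> S) = 1 \<and> card (e \<inter> B) = 2) \<and>
     (\<forall>s\<in>S. \<exists>!e. e \<in> E \<and> s \<in> e)"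

definition gen_hedgehog :: "'a set \<Rightarrow> 'a set set \<Rightarrow> bool" where
  "gen_hedgehog V E \<longleftrightarrow> (\<exists>B S. hedgehog_with B S V E)"

definition std_hedgehog :: "'a set \<Rightarrow> 'a set set \<Rightarrow> bool" where
  "std_hedgehog V E \<longleftrightarrow> (\<exists>B S. hedgehog_with B S V E \<and>
     (\<forall>x\<in>B. \<forall>y\<in>B. x \<noteq> y \<longrightarrow> (\<exists>!s. s \<in> S \<and> {x, y, s} \<in> E)))"

end

theory Submission
  imports Defs "HOL-Library.Ramsey" "HOL-Probability.Product_PMF" "HOL-Real_Asymp.Real_Asymp"
begin

(* Colour a triple red iff it contains an edge of a random graph G on N \<approx> n^(3/2) / log n
   vertices with edge probability p = 4 log n / sqrt n.  With positive probability G has no K_8,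
   maximum degree below n/128 and no independent set of size sqrt n.  The hedgehog H has an
   8-vertex body carrying about n/64 spikes on every pair.  A red copy of H puts its body on
   8 vertices spanning a non-edge xy, and every spike over that pair must then land in the
   neighbourhood of x or of y: too many for the degree bound.  A blue copy of a standard
   hedgehog puts its body, of size at least sqrt n, on a set spanning an edge uv of G, and the
   spike over uv completes a red triple.  Hence R(S_n, H) > N. *)

section \<open>Ramsey numbers of 3-graphs\<close>

lemma has_copy_mono: "has_copy M col b V E \<Longrightarrow> M \<le> N \<Longrightarrow> has_copy N col b V E"
  unfolding has_copy_def by (fastforce simp: subset_iff)

lemma arrows3_mono: "arrows3 M VG EG VH EH \<Longrightarrow> M \<le> N \<Longrightarrow> arrows3 N VG EG VH EH"
  unfolding arrows3_def by (meson has_copy_mono)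

lemma has_copy_if_monochromatic:
  assumes "is_3graph V E" "card V = card H" "finite H" "H \<subseteq> {0..<N}"
    and mono: "\<forall>T\<in>[H]\<^bsup>3\<^esup>. col T = b"
  shows "has_copy N col b V E"
proof -
  have "finite V" using assms(1) unfolding is_3graph_def by blast
  then obtain g where g: "bij_betw g V H" using finite_same_card_bij assms(2,3) by blast
  have "col (g ` e) = b" if "e \<in> E" for e
  proof -
    have e: "e \<subseteq> V" "card e = 3" using assms(1) that unfolding is_3graph_def by auto
    then have "card (g ` e) = 3" using g by (metis bij_betw_def card_image inj_on_subset)
    moreover have "g ` e \<subseteq> H" using e g by (auto simp: bij_betw_def)
    ultimately show ?thesis using mono assms(3) by (auto simp: nsets_def intro: finite_subset)
  qed
  then show ?thesis
    unfolding has_copy_def using g assms(4) by (auto simp: bij_betw_def)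
qed

lemma arrows3_exists:
  assumes "is_3graph VG EG" "is_3graph VH EH"
  shows "\<exists>N. arrows3 N VG EG VH EH"
proof -
  obtain N :: nat where N: "partn_lst {..<N} [card VG, card VH] 3"
    using ramsey_full by blast
  have "has_copy N col False VG EG \<or> has_copy N col True VH EH" for col
  proof -
    define f where "f T = (if col T then 1 else 0 :: nat)" for T
    have "f \<in> [{..<N}]\<^bsup>3\<^esup> \<rightarrow> {..<2}" by (auto simp: f_def)
    then obtain i H where i: "i < 2" and H: "H \<in> [{..<N}]\<^bsup>([card VG, card VH] ! i)\<^esup>"
      and mono: "f ` [H]\<^bsup>3\<^esup> \<subseteq> {i}"
      by (rule partn_lstE[OF N]) (auto simp: numeral_2_eq_2)
    have fin: "finite H" "H \<subseteq> {0..<N}" using H by (auto simp: nsets_def)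
    show ?thesis
    proof (cases "i = 0")
      case True
      then have "\<forall>T\<in>[H]\<^bsup>3\<^esup>. col T = False" using mono by (auto simp: f_def split: if_splits)
      moreover have "card VG = card H" using True H by (simp add: nsets_def)
      ultimately show ?thesis using has_copy_if_monochromatic[OF assms(1) _ fin] by blast
    next
      case False
      then have "\<forall>T\<in>[H]\<^bsup>3\<^esup>. col T = True" using mono i by (auto simp: f_def split: if_splits)
      moreover have "card VH = card H" using False i H by (simp add: nsets_def less_2_cases_iff)
      ultimately show ?thesis using has_copy_if_monochromatic[OF assms(2) _ fin] by blast
    qed
  qed
  then show ?thesis unfolding arrows3_def by blast
qed

lemma ramsey3_gt:
  assumes "is_3graph VG EG" "is_3graph VH EH"
    and "\<not> has_copy N col False VG EG" "\<not> has_copy N col True VH EH"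
  shows "N < ramsey3 VG EG VH EH"
proof (rule ccontr)
  assume "\<not> ?thesis"
  moreover have "arrows3 (ramsey3 VG EG VH EH) VG EG VH EH"
    unfolding ramsey3_def using arrows3_exists[OF assms(1,2)] by (rule LeastI_ex)
  ultimately have "arrows3 N VG EG VH EH" by (simp add: arrows3_mono)
  then show False using assms(3,4) unfolding arrows3_def by blast
qed

section \<open>Random subsets and a random graph\<close>

definition random_subset :: "'a set \<Rightarrow> real \<Rightarrow> 'a set pmf" where
  "random_subset A p = map_pmf (\<lambda>b. {x\<in>A. b x}) (Pi_pmf A False (\<lambda>_. bernoulli_pmf p))"

lemma set_pmf_random_subset: "set_pmf (random_subset A p) \<subseteq> Pow A"
  by (auto simp: random_subset_def)

lemma prob_random_subset_agrees:
  assumes "finite A" "X \<subseteq> A"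
  shows "measure_pmf.prob (random_subset A p) {E. \<forall>x\<in>X. (x \<in> E) = b}
           = pmf (bernoulli_pmf p) b ^ card X"
proof -
  have "(\<lambda>b. {x\<in>A. b x}) -` {E. \<forall>x\<in>X. (x \<in> E) = b} = Pi A (\<lambda>x. if x \<in> X then {b} else UNIV)"
    using assms(2) by (auto simp: Pi_def)
  then have "measure_pmf.prob (random_subset A p) {E. \<forall>x\<in>X. (x \<in> E) = b}
      = (\<Prod>x\<in>A. measure_pmf.prob (bernoulli_pmf p) (if x \<in> X then {b} else UNIV))"
    by (simp add: random_subset_def measure_map_pmf measure_Pi_pmf_Pi[OF assms(1)])
  also have "\<dots> = (\<Prod>x\<in>A. if x \<in> X then pmf (bernoulli_pmf p) b else 1)"
    by (intro prod.cong) (auto simp: measure_pmf_single)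
  also have "\<dots> = pmf (bernoulli_pmf p) b ^ card X"
    using assms by (simp add: prod.If_cases Int_absorb1)
  finally show ?thesis .
qed

lemma prob_random_subset_superset:
  assumes "finite A" "X \<subseteq> A" "0 \<le> p" "p \<le> 1"
  shows "measure_pmf.prob (random_subset A p) {E. X \<subseteq> E} = p ^ card X"
proof -
  have "{E. X \<subseteq> E} = {E. \<forall>x\<in>X. (x \<in> E) = True}" by auto
  then show ?thesis using prob_random_subset_agrees[OF assms(1,2), of p True] assms(3,4) by simp
qed

lemma prob_random_subset_disjoint:
  assumes "finite A" "X \<subseteq> A" "0 \<le> p" "p \<le> 1"
  shows "measure_pmf.prob (random_subset A p) {E. X \<inter> E = {}} = (1 - p) ^ card X"
proof -
  have "{E. X \<inter> E = {}} = {E. \<forall>x\<in>X. (x \<in> E) = False}" by auto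
  then show ?thesis using prob_random_subset_agrees[OF assms(1,2), of p False] assms(3,4) by simp
qed

lemma pmf_exists_outside:
  assumes "measure_pmf.prob M X < 1"
  obtains x where "x \<in> set_pmf M" "x \<notin> X"
proof -
  have "measure_pmf.prob M (UNIV - X) = 1 - measure_pmf.prob M X"
    using measure_pmf.prob_compl[of X M] by simp
  then have "set_pmf M \<inter> (UNIV - X) \<noteq> {}"
    using assms by (auto simp: measure_pmf_zero_iff[symmetric])
  then show ?thesis using that by blast
qed

lemma measure_pmf_UN_le_card_mult:
  assumes "finite I" "\<And>i. i \<in> I \<Longrightarrow> measure_pmf.prob M (A i) \<le> q"
  shows "measure_pmf.prob M (\<Union>i\<in>I. A i) \<le> real (card I) * q"
proof -
  have "measure_pmf.prob M (\<Union>i\<in>I. A i) \<le> (\<Sum>i\<in>I. measure_pmf.prob M (A i))"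
    using assms(1) by (intro measure_pmf.finite_measure_subadditive_finite) auto
  also have "\<dots> \<le> real (card I) * q"
    using sum_bounded_above[of I "\<lambda>i. measure_pmf.prob M (A i)" q] assms(2) by simp
  finally show ?thesis .
qed

lemma prob_random_graph_has_clique:
  assumes "finite V" "0 \<le> p" "p \<le> 1"
  shows "measure_pmf.prob (random_subset ([V]\<^bsup>2\<^esup>) p) {E. \<exists>K\<in>[V]\<^bsup>k\<^esup>. [K]\<^bsup>2\<^esup> \<subseteq> E}
           \<le> real (card V choose k) * p ^ (k choose 2)"
proof -
  have "{E. \<exists>K\<in>[V]\<^bsup>k\<^esup>. [K]\<^bsup>2\<^esup> \<subseteq> E} = (\<Union>K\<in>[V]\<^bsup>k\<^esup>. {E. [K]\<^bsup>2\<^esup> \<subseteq> E})" by blast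
  also have "measure_pmf.prob (random_subset ([V]\<^bsup>2\<^esup>) p) \<dots> \<le> real (card ([V]\<^bsup>k\<^esup>)) * p ^ (k choose 2)"
  proof (rule measure_pmf_UN_le_card_mult)
    fix K assume "K \<in> [V]\<^bsup>k\<^esup>"
    then have "K \<subseteq> V" "finite K" "card K = k" by (auto simp: nsets_def)
    then have "[K]\<^bsup>2\<^esup> \<subseteq> [V]\<^bsup>2\<^esup>" "card ([K]\<^bsup>2\<^esup>) = k choose 2" by (auto simp: nsets_mono card_nsets)
    then show "measure_pmf.prob (random_subset ([V]\<^bsup>2\<^esup>) p) {E. [K]\<^bsup>2\<^esup> \<subseteq> E} \<le> p ^ (k choose 2)"
      using assms by (simp add: prob_random_subset_superset finite_imp_finite_nsets)
  qed (simp add: assms finite_imp_finite_nsets)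
  finally show ?thesis using assms(1) by (simp add: card_nsets)
qed

lemma prob_random_graph_has_independent_set:
  assumes "finite V" "0 \<le> p" "p \<le> 1"
  shows "measure_pmf.prob (random_subset ([V]\<^bsup>2\<^esup>) p) {E. \<exists>I\<in>[V]\<^bsup>a\<^esup>. [I]\<^bsup>2\<^esup> \<inter> E = {}}
           \<le> real (card V choose a) * (1 - p) ^ (a choose 2)"
proof -
  have "{E. \<exists>I\<in>[V]\<^bsup>a\<^esup>. [I]\<^bsup>2\<^esup> \<inter> E = {}} = (\<Union>I\<in>[V]\<^bsup>a\<^esup>. {E. [I]\<^bsup>2\<^esup> \<inter> E = {}})" by blast
  also have "measure_pmf.prob (random_subset ([V]\<^bsup>2\<^esup>) p) \<dots>
      \<le> real (card ([V]\<^bsup>a\<^esup>)) * (1 - p) ^ (a choose 2)"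
  proof (rule measure_pmf_UN_le_card_mult)
    fix I assume "I \<in> [V]\<^bsup>a\<^esup>"
    then have "I \<subseteq> V" "finite I" "card I = a" by (auto simp: nsets_def)
    then have "[I]\<^bsup>2\<^esup> \<subseteq> [V]\<^bsup>2\<^esup>" "card ([I]\<^bsup>2\<^esup>) = a choose 2" by (auto simp: nsets_mono card_nsets)
    then show "measure_pmf.prob (random_subset ([V]\<^bsup>2\<^esup>) p) {E. [I]\<^bsup>2\<^esup> \<inter> E = {}}
        \<le> (1 - p) ^ (a choose 2)"
      using assms by (simp add: prob_random_subset_disjoint finite_imp_finite_nsets)
  qed (simp add: assms finite_imp_finite_nsets)
  finally show ?thesis using assms(1) by (simp add: card_nsets)
qed

lemma prob_random_graph_has_star:
  assumes "finite V" "0 \<le> p" "p \<le> 1"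
  shows "measure_pmf.prob (random_subset ([V]\<^bsup>2\<^esup>) p)
           {E. \<exists>v\<in>V. \<exists>T\<in>[V - {v}]\<^bsup>D\<^esup>. (\<lambda>u. {v, u}) ` T \<subseteq> E}
           \<le> real (card V) * real ((card V - 1) choose D) * p ^ D"
proof -
  define stars where "stars = Sigma V (\<lambda>v. [V - {v}]\<^bsup>D\<^esup>)"
  have "finite stars" using assms(1) by (simp add: stars_def finite_imp_finite_nsets)
  have "{E. \<exists>v\<in>V. \<exists>T\<in>[V - {v}]\<^bsup>D\<^esup>. (\<lambda>u. {v, u}) ` T \<subseteq> E}
      = (\<Union>(v, T)\<in>stars. {E. (\<lambda>u. {v, u}) ` T \<subseteq> E})"
    by (auto simp: stars_def)
  also have "measure_pmf.prob (random_subset ([V]\<^bsup>2\<^esup>) p) \<dots> \<le> real (card stars) * p ^ D"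
  proof (rule measure_pmf_UN_le_card_mult[OF \<open>finite stars\<close>])
    fix vT assume "vT \<in> stars"
    then obtain v T where "vT = (v, T)" "v \<in> V" "T \<in> [V - {v}]\<^bsup>D\<^esup>" by (auto simp: stars_def)
    moreover have "inj_on (\<lambda>u. {v, u}) T" by (auto simp: inj_on_def doubleton_eq_iff)
    ultimately have "(\<lambda>u. {v, u}) ` T \<subseteq> [V]\<^bsup>2\<^esup>" "card ((\<lambda>u. {v, u}) ` T) = D"
      by (auto simp: nsets_def card_image card_insert_if)
    then show "measure_pmf.prob (random_subset ([V]\<^bsup>2\<^esup>) p) (case vT of (v, T) \<Rightarrow> {E. (\<lambda>u. {v, u}) ` T \<subseteq> E})
        \<le> p ^ D"
      using assms \<open>vT = (v, T)\<close> by (simp add: prob_random_subset_superset finite_imp_finite_nsets)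
  qed
  also have "card stars = card V * ((card V - 1) choose D)"
    using assms(1) by (simp add: stars_def card_SigmaI card_nsets finite_imp_finite_nsets)
  finally show ?thesis by simp
qed

lemma card_neighbours_less:
  assumes "E \<subseteq> [V]\<^bsup>2\<^esup>" "finite V" "\<forall>T\<in>[V - {v}]\<^bsup>D\<^esup>. \<not> (\<lambda>u. {v, u}) ` T \<subseteq> E"
  shows "card {u. {v, u} \<in> E} < D"
proof (rule ccontr)
  assume "\<not> ?thesis"
  then obtain T where T: "T \<subseteq> {u. {v, u} \<in> E}" "card T = D"
    by (meson not_less obtain_subset_with_card_n)
  have "T \<subseteq> V - {v}"
  proof
    fix u assume "u \<in> T"
    then have "{v, u} \<in> [V]\<^bsup>2\<^esup>" using T(1) assms(1) by blast
    then show "u \<in> V - {v}" by (auto simp: nsets_def)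
  qed
  then have "T \<in> [V - {v}]\<^bsup>D\<^esup>" using T(2) assms(2) by (auto simp: nsets_def intro: finite_subset)
  moreover have "(\<lambda>u. {v, u}) ` T \<subseteq> E" using T(1) by blast
  ultimately show False using assms(3) by blast
qed

lemma exists_graph_clique_degree_independence:
  fixes N k a D :: nat and p :: real
  assumes p: "0 \<le> p" "p \<le> 1"
    and small: "real (N choose k) * p ^ (k choose 2) + real N * real ((N - 1) choose D) * p ^ D
                + real (N choose a) * (1 - p) ^ (a choose 2) < 1"
  obtains E where "E \<subseteq> [{0..<N}]\<^bsup>2\<^esup>"
    and "\<forall>K\<in>[{0..<N}]\<^bsup>k\<^esup>. \<not> [K]\<^bsup>2\<^esup> \<subseteq> E"
    and "\<forall>v<N. card {u. {v, u} \<in> E} < D"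
    and "\<forall>I\<in>[{0..<N}]\<^bsup>a\<^esup>. [I]\<^bsup>2\<^esup> \<inter> E \<noteq> {}"
proof -
  define V where "V = {0..<N}"
  define M where "M = random_subset ([V]\<^bsup>2\<^esup>) p"
  define clique where "clique = {E. \<exists>K\<in>[V]\<^bsup>k\<^esup>. [K]\<^bsup>2\<^esup> \<subseteq> E}"
  define star where "star = {E. \<exists>v\<in>V. \<exists>T\<in>[V - {v}]\<^bsup>D\<^esup>. (\<lambda>u. {v, u}) ` T \<subseteq> E}"
  define indep where "indep = {E. \<exists>I\<in>[V]\<^bsup>a\<^esup>. [I]\<^bsup>2\<^esup> \<inter> E = {}}"
  have "finite V" "card V = N" by (simp_all add: V_def)
  have "measure_pmf.prob M (clique \<union> star \<union> indep)
      \<le> measure_pmf.prob M clique + measure_pmf.prob M star + measure_pmf.prob M indep"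
    using measure_Un_le[of "clique \<union> star" M indep] measure_Un_le[of clique M star] by simp
  also have "\<dots> < 1"
    using prob_random_graph_has_clique[OF \<open>finite V\<close> p, of k] prob_random_graph_has_star[OF \<open>finite V\<close> p, of D]
      prob_random_graph_has_independent_set[OF \<open>finite V\<close> p, of a] small
    unfolding M_def clique_def star_def indep_def \<open>card V = N\<close> by linarith
  finally obtain E where E: "E \<in> set_pmf M" "E \<notin> clique \<union> star \<union> indep"
    by (rule pmf_exists_outside)
  have "E \<subseteq> [V]\<^bsup>2\<^esup>" using E(1) set_pmf_random_subset unfolding M_def by blast
  moreover have "card {u. {v, u} \<in> E} < D" if "v < N" for v
    using E(2) that \<open>finite V\<close> card_neighbours_less[OF \<open>E \<subseteq> [V]\<^bsup>2\<^esup>\<close>] by (auto simp: star_def V_def)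
  moreover have "\<forall>K\<in>[V]\<^bsup>k\<^esup>. \<not> [K]\<^bsup>2\<^esup> \<subseteq> E" "\<forall>I\<in>[V]\<^bsup>a\<^esup>. [I]\<^bsup>2\<^esup> \<inter> E \<noteq> {}"
    using E(2) unfolding clique_def indep_def by blast+
  ultimately show ?thesis using that unfolding V_def by blast
qed

section \<open>Hedgehogs in the colouring induced by a graph\<close>

definition contains_edge :: "'a set set \<Rightarrow> 'a set \<Rightarrow> bool" where
  "contains_edge G T \<longleftrightarrow> (\<exists>u\<in>T. \<exists>v\<in>T. {u, v} \<in> G)"

lemma contains_edge_nonedge:
  assumes "\<forall>e\<in>G. card e = 2" "{x, y} \<notin> G" "contains_edge G {x, y, z}"
  shows "{x, z} \<in> G \<or> {y, z} \<in> G"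
proof -
  obtain u v where uv: "u \<in> {x, y, z}" "v \<in> {x, y, z}" "{u, v} \<in> G"
    using assms(3) unfolding contains_edge_def by blast
  then have "u \<noteq> v" using assms(1) by fastforce
  then show ?thesis using uv assms(2) by (auto simp: insert_commute)
qed

lemma hedgehog_edge_minus_spike:
  assumes "hedgehog_with B S V E" "e \<in> E" "s \<in> e" "s \<in> S"
  shows "e - {s} \<in> [B]\<^bsup>2\<^esup>"
proof -
  have "e \<subseteq> V" "V = B \<union> S" "B \<inter> S = {}" "card (e \<inter> S) = 1" "card (e \<inter> B) = 2"
    using assms(1,2) unfolding hedgehog_with_def is_3graph_def by blast+
  moreover obtain t where "e \<inter> S = {t}" using \<open>card (e \<inter> S) = 1\<close> by (auto simp: card_1_singleton_iff)
  then have "e \<inter> S = {s}" using assms(3,4) by (metis IntI singletonD)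
  ultimately have "e - {s} = e \<inter> B" by blast
  moreover have "finite (e \<inter> B)" using \<open>card (e \<inter> B) = 2\<close> by (intro card_ge_0_finite) simp
  ultimately show ?thesis using \<open>card (e \<inter> B) = 2\<close> by (simp add: nsets_def)
qed

lemma card_spikes_le_choose_body:
  assumes hh: "hedgehog_with B S V E"
    and std: "\<forall>x\<in>B. \<forall>y\<in>B. x \<noteq> y \<longrightarrow> (\<exists>!s. s \<in> S \<and> {x, y, s} \<in> E)"
  shows "card S \<le> card B choose 2"
proof -
  have "finite B" using hh unfolding hedgehog_with_def is_3graph_def by auto
  have "card S \<le> card ([B]\<^bsup>2\<^esup>)"
  proof (rule card_le_if_inj_on_rel[where r = "\<lambda>s P. insert s P \<in> E"])
    show "finite ([B]\<^bsup>2\<^esup>)" using \<open>finite B\<close> by (rule finite_imp_finite_nsets)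
  next
    fix s assume "s \<in> S"
    then obtain e where "e \<in> E" "s \<in> e" using hh unfolding hedgehog_with_def by blast
    then show "\<exists>P. P \<in> [B]\<^bsup>2\<^esup> \<and> insert s P \<in> E"
      using hedgehog_edge_minus_spike[OF hh _ _ \<open>s \<in> S\<close>] by (metis insert_Diff)
  next
    fix s t P assume st: "s \<in> S" "t \<in> S" "insert s P \<in> E" "insert t P \<in> E"
      and "P \<in> [B]\<^bsup>2\<^esup>"
    then obtain x y where xy: "P = {x, y}" "x \<in> B" "y \<in> B" "x \<noteq> y"
      by (auto simp: nsets_def card_2_iff)
    have "insert u P = {x, y, u}" for u using xy(1) by auto
    then have "{x, y, s} \<in> E" "{x, y, t} \<in> E" using st(3,4) by simp_all
    moreover have "\<exists>!u. u \<in> S \<and> {x, y, u} \<in> E" using std xy(2-4) by blast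
    ultimately show "s = t" using st(1,2) by blast
  qed
  then show ?thesis using \<open>finite B\<close> by (simp add: card_nsets)
qed

lemma le_if_sq_le_add_choose_two:
  fixes a m :: nat
  assumes "a * a \<le> m + (m choose 2)"
  shows "a \<le> m"
proof (rule ccontr)
  assume "\<not> a \<le> m"
  then have "m + 1 \<le> a" by simp
  then have "(m + 1) * (m + 1) \<le> a * a" by (intro mult_le_mono)
  moreover have "2 * (m + (m choose 2)) = m * (m + 1)"
    by (cases m) (auto simp: choose_two algebra_simps)
  ultimately show False using assms by (simp add: algebra_simps)
qed

lemma no_blue_copy_of_std_hedgehog:
  assumes indep: "\<forall>I\<in>[{0..<N}]\<^bsup>a\<^esup>. [I]\<^bsup>2\<^esup> \<inter> G \<noteq> {}"
    and hh: "hedgehog_with B S V E"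
    and std: "\<forall>x\<in>B. \<forall>y\<in>B. x \<noteq> y \<longrightarrow> (\<exists>!s. s \<in> S \<and> {x, y, s} \<in> E)"
    and "a \<le> card B"
  shows "\<not> has_copy N (contains_edge G) False V E"
proof
  assume "has_copy N (contains_edge G) False V E"
  then obtain f where f: "inj_on f V" "f ` V \<subseteq> {0..<N}" "\<forall>e\<in>E. \<not> contains_edge G (f ` e)"
    unfolding has_copy_def by auto
  have BV: "B \<subseteq> V" "finite B" using hh unfolding hedgehog_with_def is_3graph_def by auto
  obtain A where A: "A \<subseteq> B" "card A = a" using \<open>a \<le> card B\<close> obtain_subset_with_card_n by metis
  have "inj_on f A" using f(1) A(1) BV(1) by (rule inj_on_subset[OF _ subset_trans])
  then have "f ` A \<in> [{0..<N}]\<^bsup>a\<^esup>"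
    using A BV f(2) by (auto simp: nsets_def card_image intro: finite_subset)
  then obtain P where "P \<in> [f ` A]\<^bsup>2\<^esup>" "P \<in> G" using indep by blast
  then obtain x y where xy: "x \<in> A" "y \<in> A" "f x \<noteq> f y" "{f x, f y} \<in> G"
    by (auto simp: nsets_def card_2_iff)
  then have "x \<noteq> y" by blast
  then obtain s where "{x, y, s} \<in> E" using std A(1) xy(1,2) by blast
  moreover have "contains_edge G (f ` {x, y, s})" using xy(4) unfolding contains_edge_def by blast
  ultimately show False using f(3) by blast
qed

(* Spike s \<ge> k is attached to the body pair {i, j} with (s - k) mod k^2 = k * i + j; slots with
   i = j are dropped.  Each pair of body vertices in {0..<k} thus carries at least (n - k) div k^2
   spikes. *)
definition spike_slot :: "nat \<Rightarrow> nat \<Rightarrow> nat" where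
  "spike_slot k s = (s - k) mod (k * k)"

definition cyclic_spikes :: "nat \<Rightarrow> nat \<Rightarrow> nat set" where
  "cyclic_spikes k n = {s\<in>{k..<n}. spike_slot k s div k \<noteq> spike_slot k s mod k}"

definition cyclic_edges :: "nat \<Rightarrow> nat \<Rightarrow> nat set set" where
  "cyclic_edges k n = (\<lambda>s. {spike_slot k s div k, spike_slot k s mod k, s}) ` cyclic_spikes k n"

lemma spike_slot_less:
  assumes "0 < k"
  shows "spike_slot k s div k < k" "spike_slot k s mod k < k"
  using assms by (simp_all add: spike_slot_def less_mult_imp_div_less)

lemma hedgehog_with_feet:
  assumes "finite B" "finite S" "B \<inter> S = {}" "\<forall>s\<in>S. foot s \<in> [B]\<^bsup>2\<^esup>"
  shows "hedgehog_with B S (B \<union> S) ((\<lambda>s. insert s (foot s)) ` S)"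
  unfolding hedgehog_with_def
proof (intro conjI)
  have foot: "foot s \<subseteq> B" "finite (foot s)" "card (foot s) = 2" "s \<notin> foot s" if "s \<in> S" for s
    using assms(3,4) that by (auto simp: nsets_def)
  show "is_3graph (B \<union> S) ((\<lambda>s. insert s (foot s)) ` S)"
    using assms(1,2) foot unfolding is_3graph_def by auto
  show "\<forall>e\<in>(\<lambda>s. insert s (foot s)) ` S. card (e \<inter> S) = 1 \<and> card (e \<inter> B) = 2"
  proof
    fix e assume "e \<in> (\<lambda>s. insert s (foot s)) ` S"
    then obtain s where "s \<in> S" "e = insert s (foot s)" by blast
    then have "e \<inter> S = {s}" "e \<inter> B = foot s" using foot[of s] assms(3) by auto
    then show "card (e \<inter> S) = 1 \<and> card (e \<inter> B) = 2" using foot \<open>s \<in> S\<close> by simp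
  qed
  show "\<forall>s\<in>S. \<exists>!e. e \<in> (\<lambda>s. insert s (foot s)) ` S \<and> s \<in> e"
  proof
    fix s assume "s \<in> S"
    have "t = s" if "t \<in> S" "s \<in> insert t (foot t)" for t
      using that foot(1)[of t] assms(3) \<open>s \<in> S\<close> by auto
    then show "\<exists>!e. e \<in> (\<lambda>s. insert s (foot s)) ` S \<and> s \<in> e"
      using \<open>s \<in> S\<close> by blast
  qed
qed (use assms(3) in auto)

lemma hedgehog_cyclic:
  assumes "0 < k" "k \<le> n"
  shows "hedgehog_with ({0..<n} - cyclic_spikes k n) (cyclic_spikes k n) {0..<n} (cyclic_edges k n)"
proof -
  define foot where "foot s = {spike_slot k s div k, spike_slot k s mod k}" for s
  have "cyclic_spikes k n \<subseteq> {k..<n}" by (auto simp: cyclic_spikes_def)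
  then have "{0..<k} \<subseteq> {0..<n} - cyclic_spikes k n" using assms(2) by auto
  moreover have "foot s \<in> [{0..<k}]\<^bsup>2\<^esup>" if "s \<in> cyclic_spikes k n" for s
    using that spike_slot_less[OF assms(1), of s] by (auto simp: foot_def cyclic_spikes_def nsets_def)
  ultimately have "\<forall>s\<in>cyclic_spikes k n. foot s \<in> [{0..<n} - cyclic_spikes k n]\<^bsup>2\<^esup>"
    using nsets_mono by blast
  then have "hedgehog_with ({0..<n} - cyclic_spikes k n) (cyclic_spikes k n)
      (({0..<n} - cyclic_spikes k n) \<union> cyclic_spikes k n) ((\<lambda>s. insert s (foot s)) ` cyclic_spikes k n)"
    by (intro hedgehog_with_feet) (auto simp: cyclic_spikes_def)
  moreover have "({0..<n} - cyclic_spikes k n) \<union> cyclic_spikes k n = {0..<n}"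
    using \<open>cyclic_spikes k n \<subseteq> {k..<n}\<close> by auto
  moreover have "(\<lambda>s. insert s (foot s)) ` cyclic_spikes k n = cyclic_edges k n"
    by (auto simp: cyclic_edges_def foot_def insert_commute)
  ultimately show ?thesis by simp
qed

lemma many_spikes_on_pair:
  assumes "i < k" "j < k" "i \<noteq> j"
  obtains T where "T \<subseteq> {0..<n}" "card T = (n - k) div (k * k)"
    and "\<forall>s\<in>T. {i, j, s} \<in> cyclic_edges k n"
proof
  define \<mu> where "\<mu> = (n - k) div (k * k)"
  define T where "T = (\<lambda>t. k + (k * i + j) + k * k * t) ` {..<\<mu>}"
  show "card T = (n - k) div (k * k)"
    unfolding T_def \<mu>_def by (subst card_image) (auto simp: inj_on_def assms)
  have slot: "k * i + j < k * k"
  proof -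
    have "k * i + j < k * i + k" using assms(2) by simp
    also have "\<dots> \<le> k * k" using assms(1) by (metis add.commute less_eq_Suc_le mult_Suc_right mult_le_mono2)
    finally show ?thesis .
  qed
  have "s < n \<and> {i, j, s} \<in> cyclic_edges k n" if "s \<in> T" for s
  proof -
    obtain t where t: "t < \<mu>" "s = k + (k * i + j) + k * k * t" using \<open>s \<in> T\<close> unfolding T_def by auto
    have "s - k = (k * i + j) + k * k * t" using t(2) by simp
    then have "spike_slot k s = (k * i + j) mod (k * k)"
      unfolding spike_slot_def by (simp only: mod_mult_self2)
    then have "spike_slot k s = k * i + j" using slot by simp
    then have ij: "spike_slot k s div k = i" "spike_slot k s mod k = j" using assms by simp_all
    have "k * k * (t + 1) \<le> k * k * \<mu>" using t(1) by (intro mult_le_mono2) simp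
    also have "\<dots> \<le> n - k" unfolding \<mu>_def by simp
    finally have "s < n" using slot t(2) by (simp add: algebra_simps)
    then have "s \<in> cyclic_spikes k n" using ij assms(3) t(2) by (simp add: cyclic_spikes_def)
    then show ?thesis using ij \<open>s < n\<close> unfolding cyclic_edges_def by force
  qed
  then show "T \<subseteq> {0..<n}" "\<forall>s\<in>T. {i, j, s} \<in> cyclic_edges k n" by auto
qed

lemma no_red_copy_of_cyclic_hedgehog:
  assumes G: "G \<subseteq> [{0..<N}]\<^bsup>2\<^esup>"
    and clique_free: "\<forall>K\<in>[{0..<N}]\<^bsup>k\<^esup>. \<not> [K]\<^bsup>2\<^esup> \<subseteq> G"
    and degree: "\<forall>v<N. card {u. {v, u} \<in> G} < D"
    and "k \<le> n" "2 * D \<le> (n - k) div (k * k)"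
  shows "\<not> has_copy N (contains_edge G) True {0..<n} (cyclic_edges k n)"
proof
  assume "has_copy N (contains_edge G) True {0..<n} (cyclic_edges k n)"
  then obtain g where g: "inj_on g {0..<n}" "g ` {0..<n} \<subseteq> {0..<N}"
    "\<forall>e\<in>cyclic_edges k n. contains_edge G (g ` e)"
    unfolding has_copy_def by auto
  have "inj_on g {0..<k}" by (rule inj_on_subset[OF g(1)]) (use \<open>k \<le> n\<close> in auto)
  then have "g ` {0..<k} \<in> [{0..<N}]\<^bsup>k\<^esup>"
    using g(2) \<open>k \<le> n\<close> by (auto simp: nsets_def card_image)
  then obtain P where "P \<in> [g ` {0..<k}]\<^bsup>2\<^esup>" "P \<notin> G" using clique_free by blast
  then obtain i j where ij: "i < k" "j < k" "g i \<noteq> g j" "{g i, g j} \<notin> G"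
    by (auto simp: nsets_def card_2_iff)
  then have "i \<noteq> j" by blast
  then obtain T where T: "T \<subseteq> {0..<n}" "card T = (n - k) div (k * k)"
    "\<forall>s\<in>T. {i, j, s} \<in> cyclic_edges k n"
    using many_spikes_on_pair[OF ij(1,2) \<open>i \<noteq> j\<close>] by blast
  have Gcard: "\<forall>e\<in>G. card e = 2" using G by (auto simp: nsets_def)
  define nbhd where "nbhd v = {u. {v, u} \<in> G}" for v
  have "g ` T \<subseteq> nbhd (g i) \<union> nbhd (g j)"
  proof
    fix u assume "u \<in> g ` T"
    then obtain s where "s \<in> T" "u = g s" by blast
    then have "{i, j, s} \<in> cyclic_edges k n" using T(3) by blast
    then have "contains_edge G {g i, g j, u}" using g(3) \<open>u = g s\<close> by fastforce
    then have "{g i, u} \<in> G \<or> {g j, u} \<in> G" by (rule contains_edge_nonedge[OF Gcard ij(4)])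
    then show "u \<in> nbhd (g i) \<union> nbhd (g j)" by (simp add: nbhd_def)
  qed
  moreover have "finite (nbhd v)" for v
  proof (rule finite_subset)
    show "nbhd v \<subseteq> {0..<N}" using G by (auto simp: nbhd_def nsets_def)
  qed simp
  ultimately have "card (g ` T) \<le> card (nbhd (g i) \<union> nbhd (g j))" by (intro card_mono) auto
  also have "\<dots> \<le> card (nbhd (g i)) + card (nbhd (g j))" by (rule card_Un_le)
  finally have "card (g ` T) \<le> card (nbhd (g i)) + card (nbhd (g j))" .
  moreover have "card (g ` T) = card T" using T(1) g(1) by (meson card_image inj_on_subset)
  moreover have "i < n" "j < n" using ij(1,2) \<open>k \<le> n\<close> by simp_all
  then have "g i < N" "g j < N" using g(2) by (auto simp: image_subset_iff)
  then have "card (nbhd (g i)) < D" "card (nbhd (g j)) < D" using degree by (simp_all add: nbhd_def)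
  ultimately show False using T(2) \<open>2 * D \<le> (n - k) div (k * k)\<close> by linarith
qed

section \<open>Estimates for the random graph\<close>

lemma pow_div_fact_le_exp:
  fixes x :: real
  assumes "0 \<le> x"
  shows "x ^ n / fact n \<le> exp x"
proof -
  have "(\<Sum>k\<in>{n}. x ^ k /\<^sub>R fact k) \<le> (\<Sum>k. x ^ k /\<^sub>R fact k)"
    using assms by (intro sum_le_suminf summable_exp_generic) auto
  then show ?thesis by (simp add: exp_def divide_inverse mult.commute)
qed

lemma choose_mult_pow_le:
  fixes q :: real
  assumes "0 \<le> q"
  shows "real (m choose d) * q ^ d \<le> (exp 1 * real m * q / real d) ^ d"
proof (cases "d = 0")
  case False
  have "real (m choose d) * fact d \<le> real m ^ d"
    by (metis binomial_fact_pow of_nat_fact of_nat_le_iff of_nat_mult of_nat_power)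
  then have "real (m choose d) \<le> real m ^ d / fact d" by (simp add: field_simps)
  then have "real (m choose d) * q ^ d \<le> real m ^ d / fact d * q ^ d"
    using assms by (intro mult_right_mono) simp_all
  also have "\<dots> = (real m * q) ^ d / fact d" by (simp add: power_mult_distrib)
  also have "\<dots> = (real m * q / real d) ^ d * (real d ^ d / fact d)"
    using False by (simp add: power_divide)
  also have "\<dots> \<le> (real m * q / real d) ^ d * exp 1 ^ d"
    using pow_div_fact_le_exp[of "real d" d] assms
    by (intro mult_left_mono) (simp_all add: exp_of_nat_mult[symmetric])
  also have "\<dots> = (exp 1 * real m * q / real d) ^ d"
    by (simp add: power_mult_distrib[symmetric] mult_ac)
  finally show ?thesis .
qed simp

lemma choose_mult_compl_pow_le:
  fixes q :: real
  assumes "0 < m" "0 \<le> q" "q \<le> 1"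
  shows "real (m choose a) * (1 - q) ^ (a choose 2) \<le> exp (real a * (ln (real m) - (real a - 1) / 2 * q))"
proof -
  have "real (m choose a) \<le> exp (real a * ln (real m))"
    using binomial_le_pow[of a m] binomial_eq_0[of m a] assms(1)
    by (cases "a \<le> m")
      (simp_all add: binomial_eq_0 exp_of_nat_mult of_nat_le_iff[symmetric] del: of_nat_le_iff)
  moreover have "(1 - q) ^ (a choose 2) \<le> exp (- q) ^ (a choose 2)"
    using assms(3) exp_ge_add_one_self[of "- q"] by (intro power_mono) auto
  ultimately have "real (m choose a) * (1 - q) ^ (a choose 2)
      \<le> exp (real a * ln (real m)) * exp (- q * real (a choose 2))"
    using assms(3) by (intro mult_mono) (simp_all add: exp_of_nat_mult[symmetric] mult.commute)
  also have "real (a choose 2) = real a * (real a - 1) / 2"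
    by (simp add: binomial_gbinomial gbinomial_pochhammer' pochhammer_Suc numeral_2_eq_2 algebra_simps)
  finally show ?thesis by (simp add: exp_add[symmetric] field_simps)
qed

definition edge_prob :: "nat \<Rightarrow> real" where
  "edge_prob n = 4 * ln n / sqrt n"

definition host_size :: "nat \<Rightarrow> real" where
  "host_size n = n * sqrt n / (10000 * ln n)"

definition host_order :: "nat \<Rightarrow> nat" where
  "host_order n = nat \<lfloor>host_size n\<rfloor>"

definition indep_size :: "nat \<Rightarrow> nat" where
  "indep_size n = nat \<lfloor>sqrt n\<rfloor>"

definition degree_cap :: "nat \<Rightarrow> nat" where
  "degree_cap n = (n - 8) div 128"

lemma edge_prob_nonneg: "0 \<le> edge_prob n"
  by (cases "n = 0") (simp_all add: edge_prob_def)

lemma host_order_bounds: "real (host_order n) \<le> host_size n" "host_size n - 1 < real (host_order n)"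
proof -
  have "0 \<le> host_size n" by (cases "n = 0") (simp_all add: host_size_def)
  then show "real (host_order n) \<le> host_size n" "host_size n - 1 < real (host_order n)"
    unfolding host_order_def by (simp_all add: of_nat_floor)
qed

lemma indep_size_bounds: "real (indep_size n) \<le> sqrt n" "sqrt n - 1 < real (indep_size n)"
  unfolding indep_size_def by (simp_all add: of_nat_floor)

lemma indep_size_sq_le: "indep_size n * indep_size n \<le> n"
proof -
  have "real (indep_size n) * real (indep_size n) \<le> sqrt n * sqrt n"
    using indep_size_bounds(1) by (intro mult_mono) simp_all
  then show ?thesis by (simp flip: of_nat_mult)
qed

lemma degree_cap_ge:
  assumes "272 \<le> n"
  shows "real n / 256 \<le> real (degree_cap n)"
proof -
  have "n - 8 = 128 * degree_cap n + (n - 8) mod 128"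
    unfolding degree_cap_def by simp
  moreover have "(n - 8) mod 128 < 128" by simp
  ultimately have "n < 128 * degree_cap n + 136" by linarith
  then show ?thesis using assms by simp
qed

lemma choose_le_pow_real: "real (m choose k) \<le> real m ^ k"
  by (cases "k \<le> m") (simp_all add: binomial_le_pow binomial_eq_0 flip: of_nat_power)

lemma eventually_clique_term_small:
  "eventually (\<lambda>n. real (host_order n choose 8) * edge_prob n ^ 28 < 1/3) sequentially"
proof -
  have "eventually (\<lambda>n. host_size n ^ 8 * edge_prob n ^ 28 < 1/3) sequentially"
    unfolding host_size_def edge_prob_def by real_asymp
  moreover have "real (host_order n choose 8) * edge_prob n ^ 28 \<le> host_size n ^ 8 * edge_prob n ^ 28" for n
  proof (intro mult_right_mono)
    show "real (host_order n choose 8) \<le> host_size n ^ 8"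
      using choose_le_pow_real power_mono[OF host_order_bounds(1)] by (meson of_nat_0_le_iff order_trans)
  qed (simp add: edge_prob_nonneg)
  ultimately show ?thesis by (elim eventually_mono) (rule le_less_trans)
qed

lemma degree_term_le:
  assumes "272 \<le> n" "0 < ln n"
  shows "real (host_order n) * real ((host_order n - 1) choose degree_cap n) * edge_prob n ^ degree_cap n
    \<le> host_size n * (1/2) powr (n / 256)"
proof -
  define N D p where "N = host_order n" and "D = degree_cap n" and "p = edge_prob n"
  have D: "real n / 256 \<le> real D" using degree_cap_ge[OF assms(1)] by (simp add: D_def)
  have NM: "real N \<le> host_size n" using host_order_bounds(1) by (simp add: N_def)
  have p: "0 \<le> p" by (simp add: p_def edge_prob_nonneg)
  have "real (N - 1) \<le> host_size n" using NM by (meson diff_le_self of_nat_le_iff order_trans)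
  moreover have "host_size n * p = n / 2500"
    using assms by (simp add: host_size_def p_def edge_prob_def field_simps)
  ultimately have "real (N - 1) * p \<le> n / 2500" using p by (metis mult_right_mono)
  then have "exp 1 * real (N - 1) * p \<le> exp 1 * (n / 2500)" by (simp add: mult.assoc)
  then have "exp 1 * real (N - 1) * p / real D \<le> exp 1 * (n / 2500) / (n / 256)"
    using D assms(1) by (intro frac_le) simp_all
  also have "\<dots> \<le> 1/2" using exp_le assms(1) by simp
  finally have "real ((N - 1) choose D) * p ^ D \<le> (1/2) ^ D"
    using choose_mult_pow_le[OF p, of "N - 1" D]
    by (meson order_trans power_mono p divide_nonneg_nonneg mult_nonneg_nonneg exp_ge_zero of_nat_0_le_iff)
  also have "\<dots> \<le> (1/2) powr (n / 256)"
    using D by (simp add: powr_realpow[symmetric] powr_mono')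
  finally have "real N * (real ((N - 1) choose D) * p ^ D) \<le> host_size n * (1/2) powr (n / 256)"
    using NM p by (intro mult_mono) simp_all
  then show ?thesis by (simp add: N_def D_def p_def mult.assoc)
qed

lemma eventually_degree_term_small:
  "eventually (\<lambda>n. real (host_order n) * real ((host_order n - 1) choose degree_cap n)
      * edge_prob n ^ degree_cap n < 1/3) sequentially"
proof -
  have "eventually (\<lambda>n. 0 < ln n) sequentially" by real_asymp
  moreover have "eventually (\<lambda>n. host_size n * (1/2) powr (n / 256) < 1/3) sequentially"
    unfolding host_size_def by real_asymp
  ultimately show ?thesis
    using eventually_ge_at_top[of 272] by eventually_elim (use degree_term_le in fastforce)
qed

lemma indep_term_le:
  assumes "edge_prob n \<le> 1" "1 < host_size n - 1"
    and neg: "ln (host_size n) - (sqrt n - 2) / 2 * edge_prob n \<le> 0"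
  shows "real (host_order n choose indep_size n) * (1 - edge_prob n) ^ (indep_size n choose 2)
    \<le> exp ((sqrt n - 1) * (ln (host_size n) - (sqrt n - 2) / 2 * edge_prob n))"
proof -
  define N a p where "N = host_order n" and "a = indep_size n" and "p = edge_prob n"
  have p: "0 \<le> p" "p \<le> 1" using assms(1) edge_prob_nonneg by (simp_all add: p_def)
  have NM: "real N \<le> host_size n" "0 < real N"
    using host_order_bounds[of n] assms(2) by (simp_all add: N_def)
  have a: "sqrt n - 1 \<le> real a" using indep_size_bounds(2)[of n] by (simp add: a_def)
  have "ln (real N) \<le> ln (host_size n)" using NM by simp
  moreover have "(sqrt n - 2) / 2 * p \<le> (real a - 1) / 2 * p"
    using a p by (intro mult_right_mono) simp_all
  ultimately have "real a * (ln (real N) - (real a - 1) / 2 * p)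
      \<le> real a * (ln (host_size n) - (sqrt n - 2) / 2 * p)"
    by (intro mult_left_mono) simp_all
  also have "\<dots> \<le> (sqrt n - 1) * (ln (host_size n) - (sqrt n - 2) / 2 * p)"
    using a neg by (intro mult_right_mono_neg) (simp_all add: p_def)
  finally show ?thesis
    using choose_mult_compl_pow_le[of N p a] NM(2) p
    by (simp add: N_def a_def p_def) (meson exp_le_cancel_iff order_trans)
qed

lemma eventually_indep_term_small:
  "eventually (\<lambda>n. real (host_order n choose indep_size n)
      * (1 - edge_prob n) ^ (indep_size n choose 2) < 1/3) sequentially"
proof -
  have "eventually (\<lambda>n. edge_prob n \<le> 1) sequentially"
    unfolding edge_prob_def by real_asymp
  moreover have "eventually (\<lambda>n. 1 < host_size n - 1) sequentially"
    unfolding host_size_def by real_asymp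
  moreover have "eventually (\<lambda>n. ln (host_size n) - (sqrt n - 2) / 2 * edge_prob n \<le> 0) sequentially"
    unfolding host_size_def edge_prob_def by real_asymp
  moreover have "eventually (\<lambda>n.
      exp ((sqrt n - 1) * (ln (host_size n) - (sqrt n - 2) / 2 * edge_prob n)) < 1/3) sequentially"
    unfolding host_size_def edge_prob_def by real_asymp
  ultimately show ?thesis
    by eventually_elim (use indep_term_le in fastforce)
qed

lemma eventually_host_order_large:
  "eventually (\<lambda>n. n powr (3/2) / (20000 * ln n) \<le> real (host_order n)) sequentially"
proof -
  have "eventually (\<lambda>n. n powr (3/2) / (20000 * ln n) \<le> host_size n - 1) sequentially"
    unfolding host_size_def by real_asymp
  then show ?thesis
    by (rule eventually_mono) (use host_order_bounds(2) in \<open>smt (verit)\<close>)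
qed

lemma ramsey3_std_hedgehog_cyclic_hedgehog_gt:
  assumes G: "G \<subseteq> [{0..<N}]\<^bsup>2\<^esup>"
    and clique_free: "\<forall>K\<in>[{0..<N}]\<^bsup>k\<^esup>. \<not> [K]\<^bsup>2\<^esup> \<subseteq> G"
    and degree: "\<forall>v<N. card {u. {v, u} \<in> G} < D"
    and indep: "\<forall>I\<in>[{0..<N}]\<^bsup>a\<^esup>. [I]\<^bsup>2\<^esup> \<inter> G \<noteq> {}"
    and "0 < k" "k \<le> n" "2 * D \<le> (n - k) div (k * k)" "a * a \<le> n"
    and "std_hedgehog V E" "card V = n"
  shows "N < ramsey3 V E {0..<n} (cyclic_edges k n)"
proof (rule ramsey3_gt)
  obtain B S where hh: "hedgehog_with B S V E"
    and std: "\<forall>x\<in>B. \<forall>y\<in>B. x \<noteq> y \<longrightarrow> (\<exists>!s. s \<in> S \<and> {x, y, s} \<in> E)"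
    using \<open>std_hedgehog V E\<close> unfolding std_hedgehog_def by blast
  then show "is_3graph V E" unfolding hedgehog_with_def by blast
  have "finite V" "V = B \<union> S" "B \<inter> S = {}"
    using hh unfolding hedgehog_with_def is_3graph_def by blast+
  then have "card V = card B + card S" by (simp add: card_Un_disjoint)
  then have "a * a \<le> card B + (card B choose 2)"
    using card_spikes_le_choose_body[OF hh std] \<open>a * a \<le> n\<close> \<open>card V = n\<close> by linarith
  then have "a \<le> card B" by (rule le_if_sq_le_add_choose_two)
  then show "\<not> has_copy N (contains_edge G) False V E"
    by (rule no_blue_copy_of_std_hedgehog[OF indep hh std])
  show "is_3graph {0..<n} (cyclic_edges k n)"
    using hedgehog_cyclic[OF \<open>0 < k\<close> \<open>k \<le> n\<close>] unfolding hedgehog_with_def by blast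
  show "\<not> has_copy N (contains_edge G) True {0..<n} (cyclic_edges k n)"
    using no_red_copy_of_cyclic_hedgehog[OF G clique_free degree] assms(6,7) .
qed

lemma host_order_less_ramsey3:
  assumes "8 \<le> n" "edge_prob n \<le> 1"
    and small: "real (host_order n choose 8) * edge_prob n ^ (8 choose 2)
      + real (host_order n) * real ((host_order n - 1) choose degree_cap n) * edge_prob n ^ degree_cap n
      + real (host_order n choose indep_size n) * (1 - edge_prob n) ^ (indep_size n choose 2) < 1"
    and "std_hedgehog V E" "card V = n"
  shows "host_order n < ramsey3 V E {0..<n} (cyclic_edges 8 n)"
proof -
  obtain G where G: "G \<subseteq> [{0..<host_order n}]\<^bsup>2\<^esup>"
    and clique_free: "\<forall>K\<in>[{0..<host_order n}]\<^bsup>8\<^esup>. \<not> [K]\<^bsup>2\<^esup> \<subseteq> G"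
    and degree: "\<forall>v<host_order n. card {u. {v, u} \<in> G} < degree_cap n"
    and indep: "\<forall>I\<in>[{0..<host_order n}]\<^bsup>indep_size n\<^esup>. [I]\<^bsup>2\<^esup> \<inter> G \<noteq> {}"
    using exists_graph_clique_degree_independence[OF edge_prob_nonneg assms(2) small] by blast
  have "2 * degree_cap n \<le> (n - 8) div (8 * 8)"
    unfolding degree_cap_def using div_mult2_eq[of "n - 8" 64 2] by simp
  from ramsey3_std_hedgehog_cyclic_hedgehog_gt[OF G clique_free degree indep _ assms(1) this
      indep_size_sq_le assms(4,5)]
  show ?thesis by simp
qed

lemma eventually_ramsey3_cyclic_hedgehog_large:
  "eventually (\<lambda>n. 8 \<le> n \<and> (\<forall>(V :: 'a set) E. std_hedgehog V E \<and> card V = n \<longrightarrow>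
      n powr (3/2) / (20000 * ln n) < real (ramsey3 V E {0..<n} (cyclic_edges 8 n)))) sequentially"
proof -
  have "eventually (\<lambda>n. edge_prob n \<le> 1) sequentially"
    unfolding edge_prob_def by real_asymp
  then show ?thesis
    using eventually_ge_at_top[of 8] eventually_clique_term_small eventually_degree_term_small
      eventually_indep_term_small eventually_host_order_large
  proof eventually_elim
    case (elim n)
    moreover have "(8 choose 2) = (28::nat)" by (simp add: choose_two)
    ultimately have "real (host_order n choose 8) * edge_prob n ^ (8 choose 2)
        + real (host_order n) * real ((host_order n - 1) choose degree_cap n) * edge_prob n ^ degree_cap n
        + real (host_order n choose indep_size n) * (1 - edge_prob n) ^ (indep_size n choose 2) < 1"
      by simp
    note ramsey = host_order_less_ramsey3[OF \<open>8 \<le> n\<close> \<open>edge_prob n \<le> 1\<close> this]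
    show ?case
    proof (intro conjI allI impI)
      fix V :: "'a set" and E assume "std_hedgehog V E \<and> card V = n"
      then have "real (host_order n) < real (ramsey3 V E {0..<n} (cyclic_edges 8 n))"
        using ramsey[of V E] by simp
      then show "n powr (3/2) / (20000 * ln n) < real (ramsey3 V E {0..<n} (cyclic_edges 8 n))"
        using elim(6) by linarith
    qed (rule \<open>8 \<le> n\<close>)
  qed
qed

theorem mainTheorem6:
  shows "\<exists>c::real. c > 0 \<and> (\<exists>n0::nat. \<forall>n\<ge>n0.
     \<exists>(VH::nat set) EH. gen_hedgehog VH EH \<and> card VH = n \<and>
       (\<forall>(VS::nat set) ES. std_hedgehog VS ES \<and> card VS = n \<longrightarrow>
          real (ramsey3 VS ES VH EH) \<ge> c * real n powr (3/2) / ln (real n)))"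
proof -
  obtain n0 where n0: "\<And>n. n0 \<le> n \<Longrightarrow> 8 \<le> n \<and> (\<forall>(V :: nat set) E. std_hedgehog V E \<and> card V = n \<longrightarrow>
      n powr (3/2) / (20000 * ln n) < real (ramsey3 V E {0..<n} (cyclic_edges 8 n)))"
    using eventually_ramsey3_cyclic_hedgehog_large unfolding eventually_sequentially by blast
  show ?thesis
  proof (intro exI[of _ "1/20000"] exI[of _ n0] conjI allI impI exI)
    fix n and V :: "nat set" and E assume "n0 \<le> n" and "std_hedgehog V E \<and> card V = n"
    then have "n powr (3/2) / (20000 * ln n) < real (ramsey3 V E {0..<n} (cyclic_edges 8 n))"
      using n0[OF \<open>n0 \<le> n\<close>] by blast
    then show "1/20000 * real n powr (3/2) / ln (real n) \<le> real (ramsey3 V E {0..<n} (cyclic_edges 8 n))"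
      by simp
  next
    fix n assume "n0 \<le> n"
    then show "gen_hedgehog {0..<n} (cyclic_edges 8 n)"
      unfolding gen_hedgehog_def using hedgehog_cyclic[of 8 n] n0 by auto
  qed simp_all
qed

end
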